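(* Let $d=|d|e^{i\theta}\in\mathbb{C}\setminus\{0\}$, $\xi\in\mathbb{C}$, $w_m=d(m+\xi)$ for $m=1,2,\dots$, and let $(\delta\omega_m)_{m\ge1}$ be complex numbers with $\delta\omega_m=O(m^{-\epsilon})$ for some $\epsilon>0$. Define $$\Delta(\omega)=\sum_{m=1}^{\infty}\left(\frac{1}{\omega-w_m}-\frac{1}{\omega-w_m-\delta\omega_m}\right).$$ Then for every $\varphi\in\mathbb{R}$ with $\varphi\not\equiv\theta\pmod{2\pi}$, the series converges for all sufficiently large $|\omega|$ on the ray $\arg\omega=\varphi$, and $$\lim_{r\to\infty} r\,\Delta(re^{i\varphi})=0.$$ *)

theory Defs
  imports "HOL-Analysis.Analysis" "HOL-Library.Landau_Symbols"
begin

definition wpt :: "complex \<Rightarrow> complex \<Rightarrow> nat \<Rightarrow> complex" where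
  "wpt d \<xi> m = d * (of_nat m + \<xi>)"

definition Delta_term :: "complex \<Rightarrow> complex \<Rightarrow> (nat \<Rightarrow> complex) \<Rightarrow> complex \<Rightarrow> nat \<Rightarrow> complex" where
  "Delta_term d \<xi> dw \<omega> m =
     1 / (\<omega> - wpt d \<xi> m) - 1 / (\<omega> - wpt d \<xi> m - dw m)"

definition Delta :: "complex \<Rightarrow> complex \<Rightarrow> (nat \<Rightarrow> complex) \<Rightarrow> complex \<Rightarrow> complex" where
  "Delta d \<xi> dw \<omega> = (\<Sum>m. Delta_term d \<xi> dw \<omega> (Suc m))"

end

theory Submission
  imports Defs
begin

text \<open>On the ray \<open>\<omega> = r cis \<phi>\<close>, which meets the ray through the points \<open>d m\<close> at a nonzero
  angle, one has \<open>|\<omega> - d m| \<ge> c (r + |d| m)\<close> with \<open>c = |sin ((\<phi> - \<theta>) / 2)| > 0\<close>. So for large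
  \<open>r\<close> both denominators of the \<open>m\<close>-th summand are at least \<open>c (r + |d| m) / 2\<close> in modulus, and
  the summand is bounded by \<open>b m / (r + s m)\<^sup>2\<close> with \<open>b m = 4 |dw m| / c\<^sup>2\<close>, \<open>s m = |d| m\<close>.
  After multiplying by \<open>r\<close> this is at most \<open>b m / s m = O(m powr (-1 - \<epsilon>))\<close>, a summable
  majorant, and at most \<open>b m / r \<rightarrow> 0\<close>; Tannery's theorem then gives \<open>r \<Delta>(r cis \<phi>) \<rightarrow> 0\<close>.\<close>

lemma cos_lt_one_if_not_multiple_2pi:
  assumes "\<forall>k::int. x \<noteq> 2 * pi * of_int k"
  shows "cos x < 1"
proof -
  have "cos x \<noteq> 1"
    using assms by (auto simp: cos_one_2pi_int mult.commute mult.left_commute)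
  then show ?thesis
    using cos_le_one[of x] by linarith
qed

lemma norm_ray_diff_ge:
  fixes r s \<psi> :: real
  assumes "r \<ge> 0" "s \<ge> 0"
  shows "sqrt ((1 - cos \<psi>) / 2) * (r + s) \<le> cmod (of_real r * cis \<psi> - of_real s)"
proof -
  have "(cmod (of_real r * cis \<psi> - of_real s))\<^sup>2 = (r * cos \<psi> - s)\<^sup>2 + (r * sin \<psi>)\<^sup>2"
    by (simp add: cmod_power2)
  also have "\<dots> = r\<^sup>2 - 2 * r * s * cos \<psi> + s\<^sup>2"
    using sin_cos_squared_add[of \<psi>] by algebra
  finally have norm_sq: "(cmod (of_real r * cis \<psi> - of_real s))\<^sup>2 = r\<^sup>2 - 2 * r * s * cos \<psi> + s\<^sup>2" .
  have "r\<^sup>2 - 2 * r * s * cos \<psi> + s\<^sup>2 = (1 - cos \<psi>) / 2 * (r + s)\<^sup>2 + (1 + cos \<psi>) / 2 * (r - s)\<^sup>2"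
    by (simp add: power2_eq_square field_simps)
  moreover have "0 \<le> (1 + cos \<psi>) / 2 * (r - s)\<^sup>2"
  proof -
    have "0 \<le> 1 + cos \<psi>"
      using cos_ge_minus_one[of \<psi>] by linarith
    then show ?thesis
      by simp
  qed
  ultimately have "(sqrt ((1 - cos \<psi>) / 2) * (r + s))\<^sup>2 \<le> (cmod (of_real r * cis \<psi> - of_real s))\<^sup>2"
    using cos_le_one[of \<psi>] by (simp add: norm_sq power_mult_distrib)
  then show ?thesis
    by (rule power2_le_imp_le) simp
qed

lemma norm_inverse_diff_le:
  fixes a \<delta> :: "'a::real_normed_field"
  assumes "L > 0" "L \<le> norm a" "L \<le> norm (a - \<delta>)"
  shows "norm (1 / a - 1 / (a - \<delta>)) \<le> norm \<delta> / L\<^sup>2"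
proof -
  have "a \<noteq> 0" "a - \<delta> \<noteq> 0"
    using assms by auto
  then have "1 / a - 1 / (a - \<delta>) = - \<delta> / (a * (a - \<delta>))"
    by (simp add: field_simps)
  then have "norm (1 / a - 1 / (a - \<delta>)) = norm \<delta> / (norm a * norm (a - \<delta>))"
    by (simp add: norm_mult norm_divide)
  also have "\<dots> \<le> norm \<delta> / L\<^sup>2"
    unfolding power2_eq_square using assms
    by (intro divide_left_mono mult_mono mult_pos_pos) auto
  finally show ?thesis .
qed

lemma tendsto_zero_if_bigo_neg_powr:
  fixes f :: "nat \<Rightarrow> 'a::real_normed_vector"
  assumes "\<epsilon> > 0" "(\<lambda>m. norm (f m)) \<in> O(\<lambda>m. real m powr (- \<epsilon>))"
  shows "f \<longlonglongrightarrow> 0"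
proof -
  obtain C where "eventually (\<lambda>m. norm (f m) \<le> C * real m powr (- \<epsilon>)) at_top"
    using landau_o.bigE[OF assms(2)] by auto
  moreover have "(\<lambda>m. real m powr (- \<epsilon>)) \<longlonglongrightarrow> 0"
    using assms(1) by (intro tendsto_neg_powr filterlim_real_sequentially) auto
  ultimately show ?thesis
    by (rule Lim_null_comparison[OF _ tendsto_mult_right_zero])
qed

lemma summable_norm_div_if_bigo_neg_powr:
  fixes f :: "nat \<Rightarrow> 'a::real_normed_vector"
  assumes "\<epsilon> > 0" "(\<lambda>m. norm (f m)) \<in> O(\<lambda>m. real m powr (- \<epsilon>))"
  shows "summable (\<lambda>k. norm (f (Suc k)) / real (Suc k))"
proof -
  obtain C where "eventually (\<lambda>m. norm (f m) \<le> C * real m powr (- \<epsilon>)) at_top"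
    using landau_o.bigE[OF assms(2)] by auto
  then have "eventually (\<lambda>k. norm (f (Suc k)) \<le> C * real (Suc k) powr (- \<epsilon>)) at_top"
    by (rule eventually_sequentially_Suc[THEN iffD2])
  then have "eventually (\<lambda>k. norm (norm (f (Suc k)) / real (Suc k))
               \<le> C * real (Suc k) powr (- 1 - \<epsilon>)) at_top"
  proof eventually_elim
    case (elim k)
    have "real (Suc k) powr (- 1 - \<epsilon>) = real (Suc k) powr (- \<epsilon>) / real (Suc k)"
      by (simp add: powr_diff powr_minus divide_inverse)
    with elim show ?case
      by (simp add: divide_right_mono)
  qed
  moreover have "summable (\<lambda>k. real (Suc k) powr (- 1 - \<epsilon>))"
    using summable_Suc_iff[of "\<lambda>n. real n powr (- 1 - \<epsilon>)"] summable_real_powr_iff assms(1)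
    by simp
  ultimately show ?thesis
    by (rule summable_comparison_test_ev[OF _ summable_mult])
qed

lemma tendsto_scaleR_suminf_zero:
  fixes f :: "real \<Rightarrow> nat \<Rightarrow> 'a::{real_normed_algebra, banach}" and b s :: "nat \<Rightarrow> real"
  assumes b: "\<And>k. b k \<ge> 0" and s: "\<And>k. s k > 0"
    and summable: "summable (\<lambda>k. b k / s k)"
    and bound: "\<forall>\<^sub>F r in at_top. \<forall>k. norm (f r k) \<le> b k / (r + s k)\<^sup>2"
  shows "(\<forall>\<^sub>F r in at_top. summable (f r)) \<and> ((\<lambda>r. r *\<^sub>R suminf (f r)) \<longlongrightarrow> 0) at_top"
proof -
  define a where "a k r = r *\<^sub>R f r k" for k r
  have scaled_bound: "norm (a k r) \<le> b k / s k \<and> norm (a k r) \<le> b k / r"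
    if r: "r > 0" and f: "norm (f r k) \<le> b k / (r + s k)\<^sup>2" for k r
  proof -
    have "norm (a k r) \<le> b k * (r / (r + s k)\<^sup>2)"
      using mult_left_mono[OF f, of r] r by (simp add: a_def mult.commute)
    moreover have "r * s k \<le> (r + s k)\<^sup>2" "r * r \<le> (r + s k)\<^sup>2"
      using r s[of k] by (simp_all add: power2_eq_square algebra_simps)
    then have "r / (r + s k)\<^sup>2 \<le> 1 / s k" "r / (r + s k)\<^sup>2 \<le> 1 / r"
      using r s[of k] by (simp_all add: divide_simps)
    ultimately have "norm (a k r) \<le> b k * (1 / s k)" "norm (a k r) \<le> b k * (1 / r)"
      using b[of k] by (meson mult_left_mono order_trans)+
    then show ?thesis
      by simp
  qed
  have eventually_bound: "\<forall>\<^sub>F r in at_top. \<forall>k. norm (a k r) \<le> b k / s k \<and> norm (a k r) \<le> b k / r"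
    using bound eventually_gt_at_top[of 0] by eventually_elim (intro allI scaled_bound, simp_all)
  have a_tendsto_zero: "((\<lambda>r. a k r) \<longlongrightarrow> 0) at_top" for k
  proof (rule Lim_null_comparison)
    show "\<forall>\<^sub>F r in at_top. norm (a k r) \<le> b k / r"
      using eventually_bound by eventually_elim blast
    show "((\<lambda>r. b k / r) \<longlongrightarrow> 0) at_top"
      by (intro tendsto_divide_0[OF tendsto_const] filterlim_at_top_imp_at_infinity filterlim_ident)
  qed
  have a_bounded: "\<forall>\<^sub>F (k, r) in at_top \<times>\<^sub>F at_top. norm (a k r) \<le> b k / s k"
    using eventually_prodI[OF always_eventually[of "\<lambda>_. True"] eventually_bound]
    by (rule eventually_mono) auto
  have summable_a: "\<forall>\<^sub>F r in at_top. summable (\<lambda>k. norm (a k r))"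
    and tendsto_a: "((\<lambda>r. suminf (\<lambda>k. a k r)) \<longlongrightarrow> 0) at_top"
    using tannerys_theorem[OF a_tendsto_zero a_bounded summable] by simp_all
  have summable_f: "\<forall>\<^sub>F r in at_top. summable (f r)"
    using summable_a eventually_gt_at_top[of 0]
  proof eventually_elim
    case (elim r)
    then have "summable (\<lambda>k. inverse r *\<^sub>R a k r)"
      by (intro summable_scaleR_right) (rule summable_norm_cancel)
    with elim show ?case
      by (simp add: a_def)
  qed
  have suminf_a_eq: "\<forall>\<^sub>F r in at_top. suminf (\<lambda>k. a k r) = r *\<^sub>R suminf (f r)"
    using summable_f by eventually_elim (simp add: a_def suminf_scaleR_right)
  have "((\<lambda>r. r *\<^sub>R suminf (f r)) \<longlongrightarrow> 0) at_top"
    using tendsto_a suminf_a_eq by (rule Lim_transform_eventually)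
  with summable_f show ?thesis ..
qed

lemma norm_ray_minus_wpt_ge:
  fixes d \<xi> :: complex and r \<theta> \<phi> :: real
  assumes d: "d = of_real (cmod d) * cis \<theta>" and r: "r \<ge> 0"
  shows "sqrt ((1 - cos (\<phi> - \<theta>)) / 2) * (r + cmod d * real m) - cmod (d * \<xi>)
           \<le> cmod (of_real r * cis \<phi> - wpt d \<xi> m)"
proof -
  let ?z = "of_real r * cis (\<phi> - \<theta>) - of_real (cmod d * real m)"
  have "wpt d \<xi> m = of_real (cmod d) * cis \<theta> * of_nat m + d * \<xi>"
    using d by (metis wpt_def distrib_left mult.commute)
  moreover have "cis \<theta> * cis (\<phi> - \<theta>) = cis \<phi>"
    by (simp add: cis_mult)
  ultimately have "of_real r * cis \<phi> - wpt d \<xi> m = cis \<theta> * ?z - d * \<xi>"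
    by (simp add: algebra_simps)
  then have "cmod ?z - cmod (d * \<xi>) \<le> cmod (of_real r * cis \<phi> - wpt d \<xi> m)"
    using norm_triangle_ineq2[of "cis \<theta> * ?z" "d * \<xi>"] by (simp add: norm_mult)
  moreover have "sqrt ((1 - cos (\<phi> - \<theta>)) / 2) * (r + cmod d * real m) \<le> cmod ?z"
    using r by (intro norm_ray_diff_ge) auto
  ultimately show ?thesis
    by linarith
qed

lemma norm_Delta_term_on_ray_le:
  fixes d \<xi> :: complex and dw :: "nat \<Rightarrow> complex" and B c r \<theta> \<phi> :: real
  assumes d: "d = of_real (cmod d) * cis \<theta>"
    and c: "c = sqrt ((1 - cos (\<phi> - \<theta>)) / 2)" "c > 0"
    and B: "\<And>m. cmod (dw m) \<le> B"
    and r: "r > 0" "2 * (cmod (d * \<xi>) + B) \<le> c * r"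
  shows "cmod (Delta_term d \<xi> dw (of_real r * cis \<phi>) m)
           \<le> 4 / c\<^sup>2 * cmod (dw m) / (r + cmod d * real m)\<^sup>2"
proof -
  define a where "a = of_real r * cis \<phi> - wpt d \<xi> m"
  define L where "L = c * (r + cmod d * real m) / 2"
  have "L = c * r / 2 + c * (cmod d * real m) / 2"
    by (simp add: L_def algebra_simps add_divide_distrib)
  moreover have "0 \<le> c * (cmod d * real m)" "0 < c * r"
    using c(2) r(1) by simp_all
  ultimately have "L \<ge> cmod (d * \<xi>) + B" "L > 0"
    using r(2) by auto
  moreover have "cmod a \<ge> 2 * L - cmod (d * \<xi>)"
    using norm_ray_minus_wpt_ge[OF d, of r \<phi> m \<xi>] r c by (simp add: a_def L_def)
  moreover have "cmod (a - dw m) \<ge> cmod a - B"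
    using norm_triangle_ineq2[of a "dw m"] B[of m] by linarith
  ultimately have "cmod (1 / a - 1 / (a - dw m)) \<le> cmod (dw m) / L\<^sup>2"
    using B[of m] norm_ge_zero[of "dw m"] by (intro norm_inverse_diff_le) linarith+
  also have "\<dots> = 4 / c\<^sup>2 * cmod (dw m) / (r + cmod d * real m)\<^sup>2"
    by (simp add: L_def power2_eq_square algebra_simps)
  finally show ?thesis
    by (simp add: Delta_term_def a_def)
qed

theorem mainTheorem7:
  fixes d \<xi> :: complex and dw :: "nat \<Rightarrow> complex" and \<epsilon> \<theta> \<phi> :: real
  assumes "d \<noteq> 0"
    and "d = of_real (cmod d) * cis \<theta>"
    and "\<epsilon> > 0"
    and "(\<lambda>m. cmod (dw m)) \<in> O(\<lambda>m. real m powr (- \<epsilon>))"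
    and "\<forall>k::int. \<phi> \<noteq> \<theta> + 2 * pi * of_int k"
  shows "(\<forall>\<^sub>F r in at_top. summable (\<lambda>m. Delta_term d \<xi> dw (of_real r * cis \<phi>) (Suc m)))
         \<and> ((\<lambda>r. of_real r * Delta d \<xi> dw (of_real r * cis \<phi>)) \<longlongrightarrow> 0) at_top"
proof -
  define c where "c = sqrt ((1 - cos (\<phi> - \<theta>)) / 2)"
  have "cos (\<phi> - \<theta>) < 1"
    using assms(5) by (intro cos_lt_one_if_not_multiple_2pi) (auto simp: algebra_simps)
  then have "c > 0"
    by (simp add: c_def)
  obtain B where B: "\<And>m. cmod (dw m) \<le> B"
    using tendsto_zero_if_bigo_neg_powr[OF assms(3,4)]
    by (metis BseqE convergentI convergent_imp_Bseq)
  have "\<forall>\<^sub>F r in at_top. \<forall>k. norm (Delta_term d \<xi> dw (of_real r * cis \<phi>) (Suc k))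
          \<le> 4 / c\<^sup>2 * cmod (dw (Suc k)) / (r + cmod d * real (Suc k))\<^sup>2"
    using eventually_ge_at_top[of "2 * (cmod (d * \<xi>) + B) / c"] eventually_gt_at_top[of 0]
  proof eventually_elim
    case (elim r)
    then have "2 * (cmod (d * \<xi>) + B) \<le> c * r"
      using \<open>c > 0\<close> by (simp add: pos_divide_le_eq mult.commute)
    with elim show ?case
      by (intro allI norm_Delta_term_on_ray_le[OF assms(2) c_def \<open>c > 0\<close> B])
  qed
  moreover have "summable (\<lambda>k. 4 / c\<^sup>2 * cmod (dw (Suc k)) / (cmod d * real (Suc k)))"
    using summable_mult[OF summable_norm_div_if_bigo_neg_powr[OF assms(3,4)], of "4 / (c\<^sup>2 * cmod d)"]
    by (simp add: field_simps)
  ultimately have "(\<forall>\<^sub>F r in at_top. summable (\<lambda>k. Delta_term d \<xi> dw (of_real r * cis \<phi>) (Suc k)))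
      \<and> ((\<lambda>r. r *\<^sub>R Delta d \<xi> dw (of_real r * cis \<phi>)) \<longlongrightarrow> 0) at_top"
    unfolding Delta_def using assms(1)
    by (intro tendsto_scaleR_suminf_zero[where b = "\<lambda>k. 4 / c\<^sup>2 * cmod (dw (Suc k))"
          and s = "\<lambda>k. cmod d * real (Suc k)"]) auto
  then show ?thesis
    by (simp add: scaleR_conv_of_real)
qed

end
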